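(* Let $k\ge 3$ be an integer, let $\mathcal H$ be a Hilbert space over $\mathbb K\in\{\mathbb R,\mathbb C\}$, and let $\mathbf{x}_1,\ldots,\mathbf{x}_k\in\mathcal H$ be norm one vectors. There exists a (nonzero) continuous symmetric $k$-linear form $T:\mathcal H\times\cdots\times\mathcal H\to\mathbb K$ attaining its norm at $(\mathbf{x}_1,\ldots,\mathbf{x}_k)$ if and only if $$\dim\big(\operatorname{span}\{\mathbf{x}_1,\ldots,\mathbf{x}_k\}\big)=\begin{cases}1 & \text{if } \mathbb K=\mathbb C,\\ 1 \text{ or } 2 & \text{if } \mathbb K=\mathbb R.\end{cases}$$
   Context: For a continuous $k$-linear form $T$ on $\mathcal H$, $\|T\|=\sup\{|T(\mathbf{w}_1,\ldots,\mathbf{w}_k)|:\|\mathbf{w}_1\|,\ldots,\|\mathbf{w}_k\|\le 1\}$. A nonzero $T$ attains its norm at $(\mathbf{x}_1,\ldots,\mathbf{x}_k)$, where the $\mathbf{x}_i$ are norm one vectors, if $\|T\|=|T(\mathbf{x}_1,\ldots,\mathbf{x}_k)|$. In the complex case, multilinear forms are $\mathbb C$-multilinear. *)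

theory Defs
  imports "HOL-Analysis.Analysis"
begin

class complex_vector = real_vector +
  fixes scaleC :: "complex \<Rightarrow> 'a \<Rightarrow> 'a"
  assumes scaleC_add_right: "scaleC a (x + y) = scaleC a x + scaleC a y"
    and scaleC_add_left: "scaleC (a + b) x = scaleC a x + scaleC b x"
    and scaleC_scaleC: "scaleC a (scaleC b x) = scaleC (a * b) x"
    and scaleC_one: "scaleC 1 x = x"
    and scaleR_scaleC: "scaleR r x = scaleC (complex_of_real r) x"

class complex_inner = complex_vector + real_normed_vector +
  fixes cinner :: "'a \<Rightarrow> 'a \<Rightarrow> complex"
  assumes cinner_commute: "cinner x y = cnj (cinner y x)"
    and cinner_add_left: "cinner (x + y) z = cinner x z + cinner y z"
    and cinner_scaleC_left: "cinner (scaleC r x) y = cnj r * cinner x y"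
    and cinner_ge_zero: "0 \<le> Re (cinner x x)"
    and cinner_eq_zero_iff: "cinner x x = 0 \<longleftrightarrow> x = 0"
    and norm_eq_sqrt_cinner: "norm x = sqrt (Re (cinner x x))"

text \<open>A k-linear form on a vector space (scalar multiplication sc over the field 's),
  represented as a function of argument families w :: nat => 'a, of which only the
  entries w 0, ..., w (k-1) matter.\<close>

definition multilinear_form ::
  "('s::field \<Rightarrow> 'a::ab_group_add \<Rightarrow> 'a) \<Rightarrow> nat \<Rightarrow> ((nat \<Rightarrow> 'a) \<Rightarrow> 's) \<Rightarrow> bool" where
  "multilinear_form sc k T \<longleftrightarrow>
     (\<forall>w w'. (\<forall>i<k. w i = w' i) \<longrightarrow> T w = T w') \<and>
     (\<forall>i<k. \<forall>w u v. T (w(i := u + v)) = T (w(i := u)) + T (w(i := v))) \<and>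
     (\<forall>i<k. \<forall>w c u. T (w(i := sc c u)) = c * T (w(i := u)))"

definition symmetric_form :: "nat \<Rightarrow> ((nat \<Rightarrow> 'a) \<Rightarrow> 's) \<Rightarrow> bool" where
  "symmetric_form k T \<longleftrightarrow> (\<forall>\<sigma> w. \<sigma> permutes {..<k} \<longrightarrow> T (w \<circ> \<sigma>) = T w)"

definition form_norm :: "nat \<Rightarrow> ((nat \<Rightarrow> 'a::real_normed_vector) \<Rightarrow> 's::real_normed_vector) \<Rightarrow> real" where
  "form_norm k T = Sup {norm (T w) | w. \<forall>i<k. norm (w i) \<le> 1}"

definition attains_norm_at ::
  "nat \<Rightarrow> ((nat \<Rightarrow> 'a::real_normed_vector) \<Rightarrow> 's::real_normed_vector) \<Rightarrow> (nat \<Rightarrow> 'a) \<Rightarrow> bool" where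
  "attains_norm_at k T x \<longleftrightarrow>
     (\<exists>w. T w \<noteq> 0) \<and> (\<forall>i<k. norm (x i) = 1) \<and> form_norm k T = norm (T x)"

end

theory Submission
  imports Defs
begin

text \<open>
  Sufficiency: if the x_i lie on a complex line, respectively on a real plane identified with
  the complex numbers by an orthonormal pair, let z be the corresponding complex coordinate.
  Then T w = (\<Prod>i. z (w i)) / (\<Prod>i. z (x i)), respectively its real part, is a symmetric
  form of norm 1 with T x = 1.

  Necessity: freezing all but three slots at x and composing with a norming functional of T x
  gives a real symmetric trilinear form P of norm 1 with P (x i) (x j) (x l) = 1. In a Hilbert
  space a functional of norm 1 attaining its norm at a unit vector y is the inner product with
  y, so P y1 y2 y3 = 1 for unit vectors determines the functional P y1 y2. Applied to the
  normalised y1 + y2 and y1 - y2 this puts y3 into the real span of y1 and y2, so the real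
  dimension is at most 2. In the complex case the rotation (i x 0, -i x m) leaves T x unchanged,
  and the resulting two real spans can only share the unit vector x l if x 0 and x m are
  complex-linearly dependent.
\<close>

section \<open>Norming functionals and real inner products\<close>

definition norming_functional :: "('a::real_normed_vector \<Rightarrow> real) \<Rightarrow> 'a \<Rightarrow> bool" where
  "norming_functional \<phi> y \<longleftrightarrow> linear \<phi> \<and> (\<forall>z. \<bar>\<phi> z\<bar> \<le> norm z) \<and> \<phi> y = norm y"

lemma norming_functional_real: "norming_functional (\<lambda>s. sgn t * s) (t::real)"
  unfolding norming_functional_def
  by (auto intro!: linearI simp: algebra_simps abs_mult abs_sgn sgn_real_def)

lemma cnj_sgn_mult_self: "cnj (sgn t) * t = of_real (cmod t)"
proof (cases "t = 0")
  case False
  have "cnj (sgn t) * t = (cnj t * t) / of_real (cmod t)"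
    by (simp add: sgn_eq)
  also have "\<dots> = of_real (cmod t)"
    using False
    by (simp add: complex_norm_square[symmetric] mult.commute[of "cnj t"] power2_eq_square)
  finally show ?thesis .
qed simp

lemma norming_functional_complex: "norming_functional (\<lambda>s. Re (cnj (sgn t) * s)) (t::complex)"
proof -
  have "\<bar>Re (cnj (sgn t) * s)\<bar> \<le> cmod s" for s
  proof -
    have "\<bar>Re (cnj (sgn t) * s)\<bar> \<le> cmod (sgn t) * cmod s"
      using abs_Re_le_cmod[of "cnj (sgn t) * s"] by (simp only: norm_mult complex_mod_cnj)
    also have "\<dots> \<le> cmod s"
      by (simp add: norm_sgn)
    finally show ?thesis .
  qed
  moreover have "linear (\<lambda>s. Re (cnj (sgn t) * s))"
    by (rule linearI) (simp_all only: distrib_left plus_complex.sel complex_scaleR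
        mult_scaleR_right scaleR_complex.sel real_scaleR_def)
  ultimately show ?thesis
    unfolding norming_functional_def by (simp add: cnj_sgn_mult_self)
qed

text \<open>A locale rather than the class real_inner, so that it also covers Re (cinner x y) on
  the complex inner product spaces of Defs.\<close>

locale real_inner_form =
  fixes ip :: "'a::real_normed_vector \<Rightarrow> 'a \<Rightarrow> real"
  assumes ip_commute: "ip x y = ip y x"
    and ip_add_left: "ip (x + y) z = ip x z + ip y z"
    and ip_scaleR_left: "ip (r *\<^sub>R x) y = r * ip x y"
    and norm_eq_sqrt_ip: "norm x = sqrt (ip x x)"
begin

lemma ip_add_right: "ip z (x + y) = ip z x + ip z y"
  by (metis ip_add_left ip_commute)

lemma ip_scaleR_right: "ip y (r *\<^sub>R x) = r * ip y x"
  by (metis ip_scaleR_left ip_commute)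

lemma ip_minus_left: "ip (- x) y = - ip x y"
  and ip_minus_right: "ip y (- x) = - ip y x"
  using ip_scaleR_left[of "-1"] ip_scaleR_right[of _ "-1"] by auto

lemma ip_diff_left: "ip (x - y) z = ip x z - ip y z"
  and ip_diff_right: "ip z (x - y) = ip z x - ip z y"
  using ip_add_left[of x "-y"] ip_add_right[of z x "-y"] ip_minus_left ip_minus_right by auto

lemma ip_self: "ip x x = (norm x)\<^sup>2"
proof -
  have "0 \<le> ip x x"
    using norm_eq_sqrt_ip[of x] norm_ge_zero[of x] by (metis not_le real_sqrt_lt_0_iff)
  then show ?thesis
    by (simp add: norm_eq_sqrt_ip)
qed

lemma ip_self_eq_0: "ip x x = 0 \<longleftrightarrow> x = 0"
  by (simp add: ip_self)

lemma ip_Bessel_pair: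
  assumes e: "norm e = 1" and ef: "ip e f = 0" and f: "f = 0 \<or> norm f = 1"
  shows "(ip e w)\<^sup>2 + (ip f w)\<^sup>2 \<le> (norm w)\<^sup>2"
proof -
  define r where "r = w - ip e w *\<^sub>R e - ip f w *\<^sub>R f"
  have ee: "ip e e = 1" using e ip_self by simp
  have "ip r r = ip w w - (ip e w)\<^sup>2 - (2 - ip f f) * (ip f w)\<^sup>2"
    by (simp add: r_def ip_diff_left ip_diff_right ip_add_left ip_add_right ip_scaleR_left
        ip_scaleR_right ee ef ip_commute[of f e] ip_commute[of w e] ip_commute[of w f]
        power2_eq_square algebra_simps)
  moreover have "(2 - ip f f) * (ip f w)\<^sup>2 \<ge> (ip f w)\<^sup>2"
    using f by (auto simp: ip_self)
  ultimately show ?thesis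
    using ip_self[of r] ip_self[of w] by (smt (verit) zero_le_power2)
qed

text \<open>If \<phi> were nonzero on some z orthogonal to y, moving from y slightly towards z would
  increase \<phi> faster than the norm.\<close>

lemma norming_functional_eq_ip:
  assumes \<phi>: "norming_functional \<phi> y" and y: "norm y = 1"
  shows "\<phi> z = ip y z"
proof -
  have lin: "linear \<phi>" and bound: "\<And>z. \<phi> z \<le> norm z" and \<phi>y: "\<phi> y = 1"
    using \<phi> y unfolding norming_functional_def by (auto intro: abs_le_D1)
  define z' where "z' = z - ip y z *\<^sub>R y"
  have yy: "ip y y = 1" using y ip_self by simp
  have yz': "ip y z' = 0" by (simp add: z'_def ip_diff_right ip_scaleR_right yy)
  have split: "\<phi> z = \<phi> z' + ip y z"
    using \<phi>y by (simp add: z'_def linear_diff[OF lin] linear_scale[OF lin])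
  define \<beta> where "\<beta> = \<phi> z'"
  have "\<beta> = 0"
  proof (rule ccontr)
    assume "\<beta> \<noteq> 0"
    then have sb: "s * \<beta>\<^sup>2 > 0" if "s > 0" for s using that by simp
    define n where "n = ip z' z'"
    have n: "n \<ge> 0" using ip_self n_def by simp
    define s where "s = 1 / (n + 1)"
    have s: "s > 0" "s * n \<le> 1" using n by (simp_all add: s_def field_simps)
    define v where "v = y + (s * \<beta>) *\<^sub>R z'"
    have \<phi>v: "\<phi> v = 1 + s * \<beta>\<^sup>2"
      using \<phi>y by (simp add: v_def \<beta>_def linear_add[OF lin] linear_scale[OF lin] power2_eq_square)
    have "ip v v = 1 + (s * \<beta>)\<^sup>2 * n"
      by (simp add: v_def ip_add_left ip_add_right ip_scaleR_left ip_scaleR_right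
          yy yz' ip_commute[of z' y] n_def power2_eq_square algebra_simps)
    then have vv: "(norm v)\<^sup>2 = 1 + (s * \<beta>)\<^sup>2 * n"
      by (simp add: ip_self)
    have "(\<phi> v)\<^sup>2 \<le> (norm v)\<^sup>2"
      using bound[of v] \<phi>v sb[OF s(1)] by (intro power_mono) auto
    then have "2 * (s * \<beta>\<^sup>2) + (s * \<beta>\<^sup>2)\<^sup>2 \<le> (s * \<beta>\<^sup>2) * (s * n)"
      unfolding \<phi>v vv by (simp add: power2_eq_square algebra_simps)
    moreover have "(s * \<beta>\<^sup>2) * (s * n) \<le> s * \<beta>\<^sup>2"
      using s sb[OF s(1)] by (simp add: mult_left_le)
    ultimately show False
      using sb[OF s(1)] by (smt (verit) zero_le_power2)
  qed
  then show ?thesis using split \<beta>_def by simp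
qed

end

section \<open>Symmetric trilinear forms of norm at most one\<close>

locale sym_trilinear_contraction =
  real_inner_form ip for ip :: "'a::real_normed_vector \<Rightarrow> 'a \<Rightarrow> real" +
  fixes P :: "'a \<Rightarrow> 'a \<Rightarrow> 'a \<Rightarrow> real"
  assumes P_add_left: "P (a + a') b c = P a b c + P a' b c"
    and P_scaleR_left: "P (r *\<^sub>R a) b c = r * P a b c"
    and P_commute_12: "P a b c = P b a c"
    and P_commute_23: "P a b c = P a c b"
    and P_bound: "\<bar>P a b c\<bar> \<le> norm a * norm b * norm c"
begin

lemma P_add_middle: "P a (b + b') c = P a b c + P a b' c"
  using P_add_left P_commute_12 by metis

lemma P_add_right: "P a b (c + c') = P a b c + P a b c'"
  using P_add_middle P_commute_23 by metis

lemma P_scaleR_middle: "P a (r *\<^sub>R b) c = r * P a b c"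
  using P_scaleR_left P_commute_12 by metis

lemma P_scaleR_right: "P a b (r *\<^sub>R c) = r * P a b c"
  using P_scaleR_middle P_commute_23 by metis

lemma P_minus_left: "P (- a) b c = - P a b c"
  and P_minus_middle: "P a (- b) c = - P a b c"
  using P_scaleR_left[of "-1" a] P_scaleR_middle[of a "-1" b] by simp_all

lemma P_square_add: "P (a + b) (a + b) c = P a a c + 2 * P a b c + P b b c"
  using P_commute_12[of b a c] by (simp add: P_add_left P_add_middle)

lemma P_square_diff: "P (a - b) (a - b) c = P a a c - 2 * P a b c + P b b c"
  using P_square_add[of a "- b" c] by (simp add: P_minus_left P_minus_middle)

lemma P_sgn_sgn:
  assumes "v \<noteq> 0"
  shows "P (sgn v) (sgn v) c = P v v c / (norm v)\<^sup>2"
  using assms by (simp add: sgn_div_norm P_scaleR_left P_scaleR_middle power2_eq_square field_simps)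

lemma attains_imp_slice_eq_ip:
  assumes "norm y1 = 1" "norm y2 = 1" "norm y3 = 1" "P y1 y2 y3 = 1"
  shows "P y1 y2 z = ip y3 z"
proof (rule norming_functional_eq_ip)
  show "norming_functional (P y1 y2) y3"
    unfolding norming_functional_def
    using P_bound[of y1 y2] assms by (auto intro!: linearI simp: P_add_right P_scaleR_right)
qed fact

text \<open>With P e e (-) = ip g and P e g (-) = ip e, the form also attains 1 at (q, q, e) for
  q = sgn (e + g); expanding P q q (-) = ip e then determines P g g (-).\<close>

lemma attains_imp_diagonal:
  assumes e: "norm e = 1" and g: "norm g = 1" and eeg: "P e e g = 1"
  shows "P g g z = 2 * ip e g * ip e z - ip g z"
proof -
  have ee: "P e e z = ip g z" for z using attains_imp_slice_eq_ip[OF e e g eeg] .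
  have ege: "P e g e = 1" using eeg P_commute_23 by metis
  have eg: "P e g z = ip e z" for z using attains_imp_slice_eq_ip[OF e g e ege] .
  have ip_ee: "ip e e = 1" using e ip_self by simp
  show ?thesis
  proof (cases "e + g = 0")
    case True
    then have "g = - e" by (simp add: eq_neg_iff_add_eq_0 add.commute)
    then show ?thesis
      using ee by (simp add: P_minus_left P_minus_middle ip_minus_left ip_minus_right ip_ee)
  next
    case False
    define p where "p = e + g"
    have p_sq: "(norm p)\<^sup>2 = 2 + 2 * ip e g"
      by (simp add: ip_self[symmetric] p_def ip_add_left ip_add_right ip_ee ip_self[of g] g
          ip_commute[of g e])
    have ppz: "P p p z = P e e z + 2 * P e g z + P g g z" for z
      unfolding p_def by (rule P_square_add)
    have "P g g e = P e g g" using P_commute_12 P_commute_23 by metis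
    then have "P p p e = (norm p)\<^sup>2"
      using ppz[of e] ee[of e] eg[of g] ege p_sq by (simp add: ip_commute[of g e] ip_self g)
    then have "P (sgn p) (sgn p) e = 1"
      using False by (simp add: P_sgn_sgn p_def)
    then have "P (sgn p) (sgn p) z = ip e z"
      using attains_imp_slice_eq_ip[of "sgn p" "sgn p" e] e False by (simp add: p_def norm_sgn)
    then have "P p p z = (norm p)\<^sup>2 * ip e z"
      using False by (simp add: P_sgn_sgn p_def field_simps)
    then show ?thesis using ppz[of z] ee eg p_sq by (simp add: algebra_simps)
  qed
qed

lemma uminus: "sym_trilinear_contraction ip (\<lambda>a b c. - P a b c)"
  by unfold_locales (auto simp: P_add_left P_scaleR_left
      intro: P_commute_12 P_commute_23 P_bound[simplified abs_minus_cancel])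

text \<open>For e = sgn (y1 + y2) and f = sgn (y1 - y2) the form attains 1 at (e, e, y3) and -1 at
  (f, f, y3); the two instances of attains_imp_diagonal then add up to
  y3 = (ip e y3) e + (ip f y3) f.\<close>

lemma attains_imp_third_in_span:
  assumes y1: "norm y1 = 1" and y2: "norm y2 = 1" and y3: "norm y3 = 1"
    and attains: "P y1 y2 y3 = 1" and sum: "y1 + y2 \<noteq> 0" and diff: "y1 \<noteq> y2"
  shows "\<exists>a b. y3 = a *\<^sub>R y1 + b *\<^sub>R y2"
proof -
  have "P y1 y3 y2 = 1" using attains P_commute_23 by metis
  then have a1: "P y1 y1 y3 = ip y2 y1"
    using attains_imp_slice_eq_ip[OF y1 y3 y2, of y1] P_commute_23 by metis
  have "P y2 y3 y1 = 1" using attains P_commute_23 P_commute_12 by metis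
  then have a2: "P y2 y2 y3 = ip y1 y2"
    using attains_imp_slice_eq_ip[OF y2 y3 y1, of y2] P_commute_23 by metis
  have ip11: "ip y1 y1 = 1" and ip22: "ip y2 y2 = 1" using y1 y2 ip_self by simp_all
  define s where "s = y1 + y2"
  define d where "d = y1 - y2"
  have "(norm s)\<^sup>2 = 2 + 2 * ip y1 y2"
    by (simp add: ip_self[symmetric] s_def ip_add_left ip_add_right ip11 ip22 ip_commute[of y2 y1])
  then have "P s s y3 = (norm s)\<^sup>2"
    using P_square_add[of y1 y2 y3] a1 a2 attains by (simp add: ip_commute[of y2 y1] s_def)
  then have Pe: "P (sgn s) (sgn s) y3 = 1"
    using sum by (simp add: P_sgn_sgn s_def)
  have "(norm d)\<^sup>2 = 2 - 2 * ip y1 y2"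
    by (simp add: ip_self[symmetric] d_def ip_diff_left ip_diff_right ip11 ip22
        ip_commute[of y2 y1])
  then have "P d d y3 = - (norm d)\<^sup>2"
    using P_square_diff[of y1 y2 y3] a1 a2 attains by (simp add: ip_commute[of y2 y1] d_def)
  then have Pf: "- P (sgn d) (sgn d) y3 = 1"
    using diff by (simp add: P_sgn_sgn d_def)
  interpret neg: sym_trilinear_contraction ip "\<lambda>a b c. - P a b c" by (rule uminus)
  have plus: "P y3 y3 z = 2 * ip (sgn s) y3 * ip (sgn s) z - ip y3 z" for z
    using attains_imp_diagonal[OF _ y3 Pe] sum by (simp add: s_def norm_sgn)
  have minus: "- P y3 y3 z = 2 * ip (sgn d) y3 * ip (sgn d) z - ip y3 z" for z
    using neg.attains_imp_diagonal[OF _ y3 Pf] diff by (simp add: d_def norm_sgn)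
  define r where "r = y3 - ip (sgn s) y3 *\<^sub>R sgn s - ip (sgn d) y3 *\<^sub>R sgn d"
  have "ip r r = 0"
    using plus[of r] minus[of r] by (simp add: r_def ip_diff_left ip_scaleR_left)
  then have "y3 = ip (sgn s) y3 *\<^sub>R sgn s + ip (sgn d) y3 *\<^sub>R sgn d"
    by (simp add: ip_self_eq_0 r_def algebra_simps)
  then have "y3 = (ip (sgn s) y3 / norm s) *\<^sub>R s + (ip (sgn d) y3 / norm d) *\<^sub>R d"
    by (simp add: sgn_div_norm divide_inverse)
  then have "y3 = (ip (sgn s) y3 / norm s + ip (sgn d) y3 / norm d) *\<^sub>R y1
      + (ip (sgn s) y3 / norm s - ip (sgn d) y3 / norm d) *\<^sub>R y2"
    by (simp add: s_def d_def algebra_simps)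
  then show ?thesis by blast
qed

end

lemma continuous_on_fun_small_near_0:
  fixes f :: "(nat \<Rightarrow> 'a::real_normed_vector) \<Rightarrow> 'b::real_normed_vector"
  assumes f: "continuous_on UNIV f" "f (\<lambda>_. 0) = 0"
  obtains \<delta> where "\<delta> > 0"
    "\<And>w. \<forall>i<k. norm (w i) < \<delta> \<Longrightarrow> \<forall>i\<ge>k. w i = 0 \<Longrightarrow> norm (f w) < 1"
proof -
  define U where "U = f -` ball 0 1"
  have "open U"
    using f(1) open_ball by (simp add: U_def continuous_on_open_vimage)
  moreover have "(\<lambda>_. 0) \<in> U" using f(2) by (simp add: U_def)
  ultimately obtain X where X: "(\<lambda>_. 0) \<in> (\<Pi>\<^sub>E i\<in>UNIV. X i)" "\<And>i. open (X i)"
    "(\<Pi>\<^sub>E i\<in>UNIV. X i) \<subseteq> U"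
    using product_topology_open_contains_basis[of "\<lambda>i. euclidean" UNIV U "\<lambda>_. 0"]
    unfolding open_fun_def by auto
  have "\<forall>i\<in>{..<k}. \<exists>d>0. ball 0 d \<subseteq> X i"
    using X(1,2) by (meson PiE_E UNIV_I open_contains_ball)
  then obtain d where d: "\<And>i. i < k \<Longrightarrow> d i > 0 \<and> ball 0 (d i) \<subseteq> X i"
    by (metis lessThan_iff)
  define \<delta> where "\<delta> = Min (insert 1 (d ` {..<k}))"
  have "\<delta> > 0" using d by (simp add: \<delta>_def)
  moreover have "norm (f w) < 1" if "\<forall>i<k. norm (w i) < \<delta>" "\<forall>i\<ge>k. w i = 0" for w
  proof -
    have "w i \<in> X i" for i
    proof (cases "i < k")
      case True
      then have "norm (w i) < d i" using that(1) by (simp add: \<delta>_def)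
      then show ?thesis using d[OF True] by auto
    next
      case False
      then show ?thesis using that(2) X(1) by auto
    qed
    then have "w \<in> (\<Pi>\<^sub>E i\<in>UNIV. X i)" by (simp add: PiE_iff)
    then show ?thesis using X(3) by (auto simp: U_def)
  qed
  ultimately show thesis by (rule that)
qed

context
  fixes sc :: "'s::field \<Rightarrow> 'a::ab_group_add \<Rightarrow> 'a"
    and k :: nat and T :: "(nat \<Rightarrow> 'a) \<Rightarrow> 's"
  assumes ml: "multilinear_form sc k T"
begin

lemma multilinear_form_add: "i < k \<Longrightarrow> T (w(i := u + v)) = T (w(i := u)) + T (w(i := v))"
  using ml unfolding multilinear_form_def by blast

lemma multilinear_form_scale: "i < k \<Longrightarrow> T (w(i := sc c u)) = c * T (w(i := u))"
  using ml unfolding multilinear_form_def by blast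

lemma multilinear_form_cong: "(\<And>i. i < k \<Longrightarrow> w i = w' i) \<Longrightarrow> T w = T w'"
  using ml unfolding multilinear_form_def by blast

lemma multilinear_form_scale_two_slots:
  assumes ij: "i < k" "j < k" "i \<noteq> j"
  shows "T (w(i := sc c (w i), j := sc d (w j))) = c * d * T w"
proof -
  have "T (w(i := sc c (w i), j := sc d (w j))) = d * T (w(i := sc c (w i)))"
    using multilinear_form_scale[OF ij(2), of "w(i := sc c (w i))" d "w j"] ij(3)
    by (simp add: fun_upd_twist[OF ij(3)])
  also have "T (w(i := sc c (w i))) = c * T w"
    using multilinear_form_scale[OF ij(1), of w c "w i"] by simp
  finally show ?thesis by (simp only: ac_simps)
qed

end

context
  fixes sc :: "'s::real_normed_field \<Rightarrow> 'a::real_normed_vector \<Rightarrow> 'a"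
    and k :: nat and T :: "(nat \<Rightarrow> 'a) \<Rightarrow> 's"
  assumes ml: "multilinear_form sc k T"
    and sc_of_real: "\<And>r u. sc (of_real r) u = r *\<^sub>R u"
begin

lemma multilinear_form_scaleR: "i < k \<Longrightarrow> T (w(i := r *\<^sub>R u)) = of_real r * T (w(i := u))"
  using multilinear_form_scale[OF ml, of i w "of_real r" u] sc_of_real by simp

lemma multilinear_form_zero_slot:
  assumes "i < k" "w i = 0"
  shows "T w = 0"
proof -
  have "T (w(i := 0)) = 0" using multilinear_form_scaleR[OF assms(1), of w 0 0] by simp
  moreover have "w(i := 0) = w" using assms(2) by auto
  ultimately show ?thesis by simp
qed

lemma multilinear_form_scaleR_slots:
  assumes "finite S" "S \<subseteq> {..<k}"
  shows "T (\<lambda>m. if m \<in> S then c m *\<^sub>R w m else w m) = (\<Prod>m\<in>S. of_real (c m)) * T w"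
  using assms
proof (induction S rule: finite_induct)
  case (insert i S)
  define v where "v = (\<lambda>m. if m \<in> S then c m *\<^sub>R w m else w m)"
  have "(\<lambda>m. if m \<in> insert i S then c m *\<^sub>R w m else w m) = v(i := c i *\<^sub>R v i)"
    using insert(2) by (auto simp: v_def)
  then have "T (\<lambda>m. if m \<in> insert i S then c m *\<^sub>R w m else w m) = of_real (c i) * T v"
    using multilinear_form_scaleR[of i v] insert by simp
  then show ?case using insert by (simp add: v_def mult.assoc)
qed simp

lemma multilinear_form_bounded:
  assumes cont: "continuous_on UNIV T" and k: "0 < k"
  obtains B where "\<And>w. \<forall>i<k. norm (w i) \<le> 1 \<Longrightarrow> norm (T w) \<le> B"
proof -
  have "T (\<lambda>_. 0) = 0" using multilinear_form_zero_slot[OF k] by simp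
  then obtain \<delta> where \<delta>: "\<delta> > 0"
    "\<And>w. \<forall>i<k. norm (w i) < \<delta> \<Longrightarrow> \<forall>i\<ge>k. w i = 0 \<Longrightarrow> norm (T w) < 1"
    using continuous_on_fun_small_near_0[OF cont] by metis
  have "norm (T w) \<le> (2 / \<delta>) ^ k" if w: "\<forall>i<k. norm (w i) \<le> 1" for w
  proof -
    define w' where "w' = (\<lambda>m. if m < k then (\<delta>/2) *\<^sub>R w m else 0)"
    have "T w' = T (\<lambda>m. if m \<in> {..<k} then (\<delta>/2) *\<^sub>R w m else w m)"
      by (rule multilinear_form_cong[OF ml]) (simp add: w'_def)
    also have "\<dots> = of_real ((\<delta>/2) ^ k) * T w"
      by (subst multilinear_form_scaleR_slots) simp_all
    finally have "norm (T w') = \<bar>(\<delta>/2) ^ k\<bar> * norm (T w)"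
      by (simp only: norm_mult norm_of_real)
    moreover have "norm (T w') < 1"
    proof (rule \<delta>(2))
      show "\<forall>i<k. norm (w' i) < \<delta>"
        using w \<delta>(1) by (auto simp: w'_def intro: le_less_trans[OF mult_left_le])
    qed (simp add: w'_def)
    moreover have pos: "(\<delta>/2) ^ k > 0" using \<delta>(1) by simp
    ultimately have "norm (T w) < 1 / (\<delta>/2) ^ k"
      by (simp add: pos_less_divide_eq[OF pos] mult.commute)
    then show ?thesis by (simp add: power_divide)
  qed
  then show thesis by (rule that)
qed

lemma norm_le_form_norm:
  assumes cont: "continuous_on UNIV T" and k: "0 < k" and w: "\<forall>i<k. norm (w i) \<le> 1"
  shows "norm (T w) \<le> form_norm k T"
proof -
  obtain B where "\<And>w. \<forall>i<k. norm (w i) \<le> 1 \<Longrightarrow> norm (T w) \<le> B"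
    using multilinear_form_bounded[OF cont k] by blast
  then show ?thesis unfolding form_norm_def
    by (intro cSup_upper bdd_aboveI) (use w in auto)
qed

lemma norm_le_form_norm_mult_prod:
  assumes cont: "continuous_on UNIV T" and k: "0 < k"
  shows "norm (T w) \<le> form_norm k T * (\<Prod>i<k. norm (w i))"
proof (cases "\<exists>i<k. w i = 0")
  case True
  then have "T w = 0" using multilinear_form_zero_slot by blast
  moreover have "0 \<le> form_norm k T"
    using norm_le_form_norm[OF cont k, of "\<lambda>_. 0"] by (simp add: order_trans[OF norm_ge_zero])
  ultimately show ?thesis by (simp add: prod_nonneg)
next
  case False
  define c where "c = (\<lambda>m. 1 / norm (w m))"
  have P: "(\<Prod>i<k. norm (w i)) > 0" using False by (intro prod_pos) simp
  have "T (\<lambda>m. if m \<in> {..<k} then c m *\<^sub>R w m else w m) = (\<Prod>m<k. of_real (c m)) * T w"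
    by (rule multilinear_form_scaleR_slots) simp_all
  moreover have "norm (T (\<lambda>m. if m \<in> {..<k} then c m *\<^sub>R w m else w m)) \<le> form_norm k T"
    using False by (intro norm_le_form_norm[OF cont k]) (simp add: c_def)
  moreover have "norm (\<Prod>m<k. (of_real (c m) :: 's)) = (\<Prod>m<k. c m)"
    by (simp add: prod_norm[symmetric] c_def del: of_real_divide)
  moreover have "(\<Prod>m<k. c m) = 1 / (\<Prod>i<k. norm (w i))"
    by (simp add: c_def prod_dividef)
  ultimately have "norm (T w) / (\<Prod>i<k. norm (w i)) \<le> form_norm k T"
    by (simp add: norm_mult)
  then show ?thesis using P by (simp add: pos_divide_le_eq)
qed

end

lemma multilinear_form_comp_linear:
  fixes T :: "(nat \<Rightarrow> 'a::real_vector) \<Rightarrow> 's::{real_algebra_1, field}"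
  assumes ml: "multilinear_form sc k T" and sc_of_real: "\<And>r u. sc (of_real r) u = r *\<^sub>R u"
    and L: "linear L"
  shows "multilinear_form scaleR k (\<lambda>w. L (T w))"
  unfolding multilinear_form_def
proof (intro conjI allI impI)
  show "L (T w) = L (T w')" if "\<forall>i<k. w i = w' i" for w w'
    using multilinear_form_cong[OF ml] that by metis
  show "L (T (w(i := u + v))) = L (T (w(i := u))) + L (T (w(i := v)))" if "i < k" for i w u v
    using multilinear_form_add[OF ml that] by (simp add: linear_add[OF L])
  show "L (T (w(i := c *\<^sub>R u))) = c * L (T (w(i := u)))" if "i < k" for i w c u
    using multilinear_form_scale[OF ml that, of w "of_real c" u] sc_of_real
    by (simp add: scaleR_conv_of_real[symmetric] linear_scale[OF L])
qed

lemma symmetric_form_comp: "symmetric_form k T \<Longrightarrow> symmetric_form k (\<lambda>w. f (T w))"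
  unfolding symmetric_form_def by simp

lemma symmetric_form_swap:
  assumes "symmetric_form k T" "p < k" "q < k"
  shows "T (w \<circ> Transposition.transpose p q) = T w"
  using assms permutes_swap_id[of p "{..<k}" q] unfolding symmetric_form_def by auto

section \<open>Rigidity of norm-attaining symmetric forms\<close>

lemma sym_trilinear_contraction_restrict:
  fixes R :: "(nat \<Rightarrow> 'a::real_normed_vector) \<Rightarrow> real"
  assumes ip: "real_inner_form ip"
    and ml: "multilinear_form scaleR k R" and sym: "symmetric_form k R"
    and bound: "\<And>w. \<bar>R w\<bar> \<le> (\<Prod>m<k. norm (w m))"
    and x: "\<forall>m<k. norm (x m) = 1"
    and ijl: "i < k" "j < k" "l < k" "i \<noteq> j" "i \<noteq> l" "j \<noteq> l"
  shows "sym_trilinear_contraction ip (\<lambda>a b c. R (x(i := a, j := b, l := c)))"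
proof -
  have first_slot: "x(i := a, j := b, l := c) = (x(j := b, l := c))(i := a)" for a b c
    using ijl by (auto simp: fun_eq_iff)
  show ?thesis
  proof (intro sym_trilinear_contraction.intro[OF ip] sym_trilinear_contraction_axioms.intro,
      unfold first_slot)
    show "R ((x(j := b, l := c))(i := a + a')) =
        R ((x(j := b, l := c))(i := a)) + R ((x(j := b, l := c))(i := a'))" for a a' b c
      by (rule multilinear_form_add[OF ml ijl(1)])
    show "R ((x(j := b, l := c))(i := r *\<^sub>R a)) = r * R ((x(j := b, l := c))(i := a))" for r a b c
      by (rule multilinear_form_scale[OF ml ijl(1)])
    show "R ((x(j := b, l := c))(i := a)) = R ((x(j := a, l := c))(i := b))" for a b c
    proof -
      have "(x(j := b, l := c))(i := a) = (x(j := a, l := c))(i := b) \<circ> Transposition.transpose i j"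
        using ijl by (auto simp: fun_eq_iff Transposition.transpose_def)
      then show ?thesis using symmetric_form_swap[OF sym ijl(1,2)] by simp
    qed
    show "R ((x(j := b, l := c))(i := a)) = R ((x(j := c, l := b))(i := a))" for a b c
    proof -
      have "(x(j := b, l := c))(i := a) = (x(j := c, l := b))(i := a) \<circ> Transposition.transpose j l"
        using ijl by (auto simp: fun_eq_iff Transposition.transpose_def)
      then show ?thesis using symmetric_form_swap[OF sym ijl(2,3)] by simp
    qed
    show "\<bar>R ((x(j := b, l := c))(i := a))\<bar> \<le> norm a * norm b * norm c" for a b c
    proof -
      let ?w = "(x(j := b, l := c))(i := a)"
      have "(\<Prod>m<k. norm (?w m)) = (\<Prod>m\<in>{i, j, l}. norm (?w m))"
        using ijl x by (intro prod.mono_neutral_right) auto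
      also have "\<dots> = norm a * norm b * norm c"
        using ijl by simp
      finally show ?thesis using bound[of ?w] by simp
    qed
  qed
qed

text \<open>Divided by its norm and composed with a norming functional L of T x, the form T restricts
  on the slots i, j, l to a symmetric trilinear form of norm at most 1 attaining 1 at
  (y1, y2, x l).\<close>

lemma attains_norm_imp_slot_in_span:
  fixes T :: "(nat \<Rightarrow> 'a::real_normed_vector) \<Rightarrow> 's::real_normed_field"
    and ip :: "'a \<Rightarrow> 'a \<Rightarrow> real"
  assumes ml: "multilinear_form sc k T" and sc_of_real: "\<And>r u. sc (of_real r) u = r *\<^sub>R u"
    and sym: "symmetric_form k T" and cont: "continuous_on UNIV T"
    and attains: "attains_norm_at k T x"
    and ip: "real_inner_form ip" and L: "norming_functional L (T x)"
    and ijl: "i < k" "j < k" "l < k" "i \<noteq> j" "i \<noteq> l" "j \<noteq> l"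
    and y: "norm y1 = 1" "norm y2 = 1" "T (x(i := y1, j := y2)) = T x" "y1 + y2 \<noteq> 0" "y1 \<noteq> y2"
  shows "\<exists>a b. x l = a *\<^sub>R y1 + b *\<^sub>R y2"
proof -
  define N where "N = form_norm k T"
  have k: "0 < k" using ijl by simp
  have bound: "norm (T w) \<le> N * (\<Prod>m<k. norm (w m))" for w
    unfolding N_def by (rule norm_le_form_norm_mult_prod[OF ml sc_of_real cont k])
  obtain w0 where "T w0 \<noteq> 0" and NTx: "N = norm (T x)" and x: "\<forall>m<k. norm (x m) = 1"
    using attains unfolding attains_norm_at_def N_def by blast
  then have "0 < N * (\<Prod>m<k. norm (w0 m))"
    using bound[of w0] by (meson less_le_trans zero_less_norm_iff)
  then have N: "N > 0"
    using prod_nonneg[of "{..<k}" "\<lambda>m. norm (w0 m)"] by (auto simp: zero_less_mult_iff)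
  have L_lin: "linear L" and L_bound: "\<And>s. \<bar>L s\<bar> \<le> norm s" and LTx: "L (T x) = N"
    using L NTx unfolding norming_functional_def by auto
  define R where "R = (\<lambda>w. L (T w) / N)"
  have "linear (\<lambda>s. L s / N)"
    by (rule linearI) (simp_all add: linear_add[OF L_lin] linear_scale[OF L_lin] add_divide_distrib)
  then have "multilinear_form scaleR k R"
    unfolding R_def by (rule multilinear_form_comp_linear[OF ml sc_of_real])
  moreover have "symmetric_form k R"
    unfolding R_def by (rule symmetric_form_comp[OF sym])
  moreover have "\<bar>R w\<bar> \<le> (\<Prod>m<k. norm (w m))" for w
    using order_trans[OF L_bound bound] N by (simp add: R_def pos_divide_le_eq mult.commute)
  ultimately interpret sym_trilinear_contraction ip "\<lambda>a b c. R (x(i := a, j := b, l := c))"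
    by (intro sym_trilinear_contraction_restrict[OF ip _ _ _ x ijl])
  have "x(i := y1, j := y2, l := x l) = x(i := y1, j := y2)"
    using ijl by (auto simp: fun_eq_iff)
  then have "R (x(i := y1, j := y2, l := x l)) = 1"
    using y(3) LTx N by (simp add: R_def)
  then show ?thesis
    using attains_imp_third_in_span[OF y(1,2) _ _ y(4,5)] x ijl(3) by simp
qed

lemma prod_lessThan_fun_upd:
  fixes i k :: nat
  assumes "i < k"
  shows "(\<Prod>m<k. g ((w(i := u)) m)) = g u * (\<Prod>m\<in>{..<k} - {i}. g (w m))"
proof -
  have "(\<Prod>m<k. g ((w(i := u)) m)) = g u * (\<Prod>m\<in>{..<k} - {i}. g ((w(i := u)) m))"
    using assms by (simp add: prod.remove[OF finite_lessThan, of i])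
  also have "(\<Prod>m\<in>{..<k} - {i}. g ((w(i := u)) m)) = (\<Prod>m\<in>{..<k} - {i}. g (w m))"
    by (rule prod.cong) auto
  finally show ?thesis .
qed

lemma multilinear_form_prod:
  fixes z :: "'a::ab_group_add \<Rightarrow> 's::field"
  assumes add: "\<And>u v. z (u + v) = z u + z v" and scale: "\<And>c u. z (sc c u) = c * z u"
  shows "multilinear_form sc k (\<lambda>w. (\<Prod>i<k. z (w i)) / d)"
  unfolding multilinear_form_def
proof (intro conjI allI impI)
  show "(\<Prod>i<k. z (w i)) / d = (\<Prod>i<k. z (w' i)) / d" if "\<forall>i<k. w i = w' i" for w w'
    using that by (metis (no_types, lifting) lessThan_iff prod.cong)
  fix i w assume i: "i < k"
  show "(\<Prod>m<k. z ((w(i := u + v)) m)) / d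
      = (\<Prod>m<k. z ((w(i := u)) m)) / d + (\<Prod>m<k. z ((w(i := v)) m)) / d" for u v
    unfolding prod_lessThan_fun_upd[OF i] add by (simp add: algebra_simps add_divide_distrib)
  show "(\<Prod>m<k. z ((w(i := sc c u)) m)) / d = c * ((\<Prod>m<k. z ((w(i := u)) m)) / d)" for c u
    unfolding prod_lessThan_fun_upd[OF i] scale by simp
qed

lemma multilinear_form_Re_prod:
  fixes z :: "'a::real_vector \<Rightarrow> complex"
  assumes z: "linear z"
  shows "multilinear_form scaleR k (\<lambda>w. Re ((\<Prod>i<k. z (w i)) / d))"
  unfolding multilinear_form_def
proof (intro conjI allI impI)
  show "Re ((\<Prod>i<k. z (w i)) / d) = Re ((\<Prod>i<k. z (w' i)) / d)" if "\<forall>i<k. w i = w' i" for w w'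
    using that by (metis (no_types, lifting) lessThan_iff prod.cong)
  fix i w assume i: "i < k"
  show "Re ((\<Prod>m<k. z ((w(i := u + v)) m)) / d)
      = Re ((\<Prod>m<k. z ((w(i := u)) m)) / d) + Re ((\<Prod>m<k. z ((w(i := v)) m)) / d)" for u v
    unfolding prod_lessThan_fun_upd[OF i] linear_add[OF z]
    by (simp add: algebra_simps add_divide_distrib)
  show "Re ((\<Prod>m<k. z ((w(i := c *\<^sub>R u)) m)) / d) = c * Re ((\<Prod>m<k. z ((w(i := u)) m)) / d)"
    for c u
    unfolding prod_lessThan_fun_upd[OF i] linear_scale[OF z]
    by (simp only: divide_inverse mult_scaleR_left scaleR_complex.sel)
qed

lemma symmetric_form_prod: "symmetric_form k (\<lambda>w. f (\<Prod>i<k. z (w i)))"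
  unfolding symmetric_form_def
proof (intro allI impI)
  fix \<sigma> :: "nat \<Rightarrow> nat" and w :: "nat \<Rightarrow> 'a" assume "\<sigma> permutes {..<k}"
  then show "f (\<Prod>i<k. z ((w \<circ> \<sigma>) i)) = f (\<Prod>i<k. z (w i))"
    using prod.permute[of \<sigma> "{..<k}" "\<lambda>i. z (w i)"] by (simp add: comp_def)
qed

lemma continuous_on_prod_slots:
  fixes z :: "'a::real_normed_vector \<Rightarrow> 'b::real_normed_field"
  assumes "bounded_linear z" "continuous_on UNIV f"
  shows "continuous_on UNIV (\<lambda>w. f ((\<Prod>i<k. z (w i)) / d))"
proof (rule continuous_on_compose2[OF assms(2)])
  show "continuous_on UNIV (\<lambda>w. (\<Prod>i<k. z (w i)) / d)"
    unfolding divide_inverse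
    by (rule continuous_on_mult_right continuous_on_prod
        bounded_linear.continuous_on[OF assms(1)] continuous_on_product_coordinates)+
qed simp

lemma attains_norm_at_prod_div:
  fixes z :: "'a::real_normed_vector \<Rightarrow> complex" and f :: "complex \<Rightarrow> 's::real_normed_vector"
  assumes z: "\<And>w. cmod (z w) \<le> norm w" and zx: "\<forall>i<k. cmod (z (x i)) = 1"
    and x: "\<forall>i<k. norm (x i) = 1"
    and f: "\<And>s. norm (f s) \<le> cmod s" "norm (f 1) = 1"
  shows "attains_norm_at k (\<lambda>w. f ((\<Prod>i<k. z (w i)) / (\<Prod>i<k. z (x i)))) x"
proof -
  let ?T = "\<lambda>w. f ((\<Prod>i<k. z (w i)) / (\<Prod>i<k. z (x i)))"
  have P: "cmod (\<Prod>i<k. z (x i)) = 1" using zx by (simp add: prod_norm[symmetric])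
  then have "(\<Prod>i<k. z (x i)) \<noteq> 0" by (metis norm_zero zero_neq_one)
  then have Tx: "norm (?T x) = 1" using f(2) by simp
  have bound: "norm (?T w) \<le> (\<Prod>i<k. norm (w i))" for w
  proof -
    have "norm (?T w) \<le> cmod ((\<Prod>i<k. z (w i)) / (\<Prod>i<k. z (x i)))" by (rule f(1))
    also have "\<dots> = (\<Prod>i<k. cmod (z (w i)))" using P by (simp add: norm_divide prod_norm)
    also have "\<dots> \<le> (\<Prod>i<k. norm (w i))" by (rule prod_mono) (simp add: z)
    finally show ?thesis .
  qed
  have "form_norm k ?T = 1"
    unfolding form_norm_def
  proof (rule cSup_eq_maximum)
    have "1 = norm (?T x) \<and> (\<forall>i<k. norm (x i) \<le> 1)" using Tx x by simp
    then show "1 \<in> {norm (?T w) |w. \<forall>i<k. norm (w i) \<le> 1}" by blast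
    fix y assume "y \<in> {norm (?T w) |w. \<forall>i<k. norm (w i) \<le> 1}"
    then obtain w where "y = norm (?T w)" "\<forall>i<k. norm (w i) \<le> 1" by blast
    then show "y \<le> 1" using bound[of w] prod_le_1[of "{..<k}" "\<lambda>i. norm (w i)"] by simp
  qed
  then show ?thesis
    unfolding attains_norm_at_def using Tx x by (auto intro!: exI[of _ x])
qed

context vector_space
begin

lemma card_le_dim_span:
  assumes "finite S" "independent B" "B \<subseteq> span S"
  shows "card B \<le> dim (span S)"
proof -
  obtain A where A: "A \<subseteq> span S" "independent A" "span S \<subseteq> span A" "card A = dim (span S)"
    using basis_exists[of "span S"] by blast
  have "finite A" using independent_span_bound[OF assms(1) A(2,1)] by blast
  moreover have "B \<subseteq> span A" using assms(3) A(3) by blast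
  ultimately have "card B \<le> card A" using independent_span_bound[OF _ assms(2)] by blast
  then show ?thesis using A(4) by simp
qed

lemma independent_singleton: "a \<noteq> 0 \<Longrightarrow> independent {a}"
  using independent_insertI[of a "{}"] independent_empty span_empty by auto

lemma dim_span_eq_1_iff:
  assumes "finite S" "a \<in> S" "a \<noteq> 0"
  shows "dim (span S) = 1 \<longleftrightarrow> S \<subseteq> span {a}"
proof
  assume dim: "dim (span S) = 1"
  show "S \<subseteq> span {a}"
  proof
    fix s assume s: "s \<in> S"
    show "s \<in> span {a}"
    proof (rule ccontr)
      assume "s \<notin> span {a}"
      then have "independent {s, a}" and "s \<noteq> a"
        using independent_insertI independent_singleton assms(3) span_base by auto
      then have "2 \<le> dim (span S)"
        using card_le_dim_span[OF assms(1), of "{s, a}"] s assms(2) span_base by auto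
      then show False using dim by simp
    qed
  qed
next
  assume "S \<subseteq> span {a}"
  then have "dim (span S) \<le> 1" using dim_le_card[of S "{a}"] by simp
  moreover have "1 \<le> dim (span S)"
    using card_le_dim_span[OF assms(1) independent_singleton[OF assms(3)]] assms(2) span_base
    by auto
  ultimately show "dim (span S) = 1" by simp
qed

lemma dim_span_in_1_2_iff:
  assumes "finite S" "a \<in> S" "a \<noteq> 0"
  shows "dim (span S) \<in> {1, 2} \<longleftrightarrow> (\<exists>b. S \<subseteq> span {a, b})"
proof
  assume dim: "dim (span S) \<in> {1, 2}"
  show "\<exists>b. S \<subseteq> span {a, b}"
  proof (cases "S \<subseteq> span {a}")
    case True
    then show ?thesis by (intro exI[of _ a]) simp
  next
    case False
    then obtain b where b: "b \<in> S" "b \<notin> span {a}" by blast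
    have "s \<in> span {a, b}" if s: "s \<in> S" for s
    proof (rule ccontr)
      assume s_new: "s \<notin> span {a, b}"
      have "independent {b, a}"
        using independent_insertI[OF b(2) independent_singleton[OF assms(3)]] by simp
      then have "independent {s, b, a}"
        using independent_insertI[of s "{b, a}"] s_new by (simp add: insert_commute)
      moreover have "{s, b, a} \<subseteq> span S" using s b(1) assms(2) span_base by auto
      moreover have "s \<noteq> a" "s \<noteq> b" "b \<noteq> a" using s_new b(2) span_base by blast+
      ultimately have "3 \<le> dim (span S)"
        using card_le_dim_span[OF assms(1), of "{s, b, a}"] by simp
      then show False using dim by auto
    qed
    then show ?thesis by blast
  qed
next
  assume "\<exists>b. S \<subseteq> span {a, b}"
  then obtain b where "S \<subseteq> span {a, b}" by blast
  moreover have "card {a, b} \<le> 2" by (cases "a = b") auto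
  ultimately have "dim (span S) \<le> 2" using dim_le_card[of S "{a, b}"] by simp
  moreover have "1 \<le> dim (span S)"
    using card_le_dim_span[OF assms(1) independent_singleton[OF assms(3)]] assms(2) span_base
    by auto
  ultimately show "dim (span S) \<in> {1, 2}" by auto
qed

end

section \<open>The real case\<close>

lemma real_inner_form_inner: "real_inner_form (inner :: 'a::real_inner \<Rightarrow> 'a \<Rightarrow> real)"
  by unfold_locales (rule inner_commute inner_add_left inner_scaleR_left norm_eq_sqrt_inner)+

lemma Gram_Schmidt_pair:
  fixes e v :: "'a::real_inner"
  assumes e: "norm e = 1"
  obtains f where "inner e f = 0" "f = 0 \<or> norm f = 1" "span {e, v} \<subseteq> span {e, f}"
proof
  define g where "g = v - inner e v *\<^sub>R e"
  show "inner e (sgn g) = 0"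
    using e by (simp add: g_def sgn_div_norm inner_diff_right dot_square_norm)
  show "sgn g = 0 \<or> norm (sgn g) = 1"
    by (simp add: norm_sgn)
  have "v = inner e v *\<^sub>R e + norm g *\<^sub>R sgn g"
    by (cases "g = 0") (simp_all add: g_def sgn_div_norm)
  then have "v \<in> span {e, sgn g}"
    by (metis span_add span_base span_scale insertI1 insertI2 singletonI)
  then show "span {e, v} \<subseteq> span {e, sgn g}"
    by (intro span_minimal subspace_span) (auto intro: span_base)
qed

lemma cmod_plane_coordinates:
  fixes e f w :: "'a::real_inner"
  assumes e: "norm e = 1" and ef: "inner e f = 0" and f: "f = 0 \<or> norm f = 1"
    and w: "w \<in> span {e, f}"
  shows "cmod (Complex (inner e w) (inner f w)) = norm w"
proof -
  obtain a b where ab: "w = a *\<^sub>R e + b *\<^sub>R f"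
    using w by (auto simp: span_breakdown_eq span_singleton algebra_simps)
  have ee: "inner e e = 1" using e by (simp add: dot_square_norm)
  have "inner f f = 0 \<or> inner f f = 1" using f by (auto simp: dot_square_norm)
  then have "(inner e w)\<^sup>2 + (inner f w)\<^sup>2 = inner w w"
    by (auto simp: ab inner_add_left inner_add_right ee ef inner_commute[of f e]
        power2_eq_square algebra_simps)
  then show ?thesis by (simp only: complex_norm) (simp add: norm_eq_sqrt_inner)
qed

lemma real_form_attaining_norm_in_plane:
  fixes x :: "nat \<Rightarrow> 'a::real_inner"
  assumes e: "norm e = 1" and x: "\<forall>i<k. norm (x i) = 1" and plane: "x ` {..<k} \<subseteq> span {e, v}"
  shows "\<exists>T :: (nat \<Rightarrow> 'a) \<Rightarrow> real. multilinear_form scaleR k T \<and> symmetric_form k T \<and>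
    continuous_on UNIV T \<and> attains_norm_at k T x"
proof -
  obtain f where f: "inner e f = 0" "f = 0 \<or> norm f = 1" "span {e, v} \<subseteq> span {e, f}"
    using Gram_Schmidt_pair[OF e] by blast
  define z where "z w = Complex (inner e w) (inner f w)" for w
  have lin: "linear z"
    by (rule linearI) (simp_all add: z_def inner_add_right complex_eq_iff)
  have bound: "cmod (z w) \<le> norm w" for w
    using real_inner_form.ip_Bessel_pair[OF real_inner_form_inner e f(1,2), of w]
    by (simp add: z_def complex_norm real_le_lsqrt)
  have zx: "\<forall>i<k. cmod (z (x i)) = 1"
  proof (intro allI impI)
    fix i assume "i < k"
    then have "x i \<in> span {e, f}" using plane f(3) by blast
    then show "cmod (z (x i)) = 1"
      using cmod_plane_coordinates[OF e f(1,2)] x \<open>i < k\<close> by (simp add: z_def)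
  qed
  have bl: "bounded_linear z"
    using lin bound
    by (intro bounded_linear_intro[where K = 1]) (simp_all add: linear_add linear_scale)
  define T where "T = (\<lambda>w. Re ((\<Prod>i<k. z (w i)) / (\<Prod>i<k. z (x i))))"
  have "multilinear_form scaleR k T"
    unfolding T_def by (rule multilinear_form_Re_prod[OF lin])
  moreover have "symmetric_form k T"
    unfolding T_def by (rule symmetric_form_prod)
  moreover have "continuous_on UNIV T"
    unfolding T_def by (rule continuous_on_prod_slots[OF bl continuous_on_Re[OF continuous_on_id]])
  moreover have "attains_norm_at k T x"
    unfolding T_def by (rule attains_norm_at_prod_div[OF bound zx x]) (simp_all add: abs_Re_le_cmod)
  ultimately show ?thesis by blast
qed

lemma real_attains_norm_imp_plane:
  fixes T :: "(nat \<Rightarrow> 'a::real_inner) \<Rightarrow> real"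
  assumes ml: "multilinear_form scaleR k T" and sym: "symmetric_form k T"
    and cont: "continuous_on UNIV T" and attains: "attains_norm_at k T x" and k: "0 < k"
  shows "\<exists>b. x ` {..<k} \<subseteq> span {x 0, b}"
proof (cases "\<forall>m<k. x m = x 0 \<or> x m = - x 0")
  case True
  then have "x m \<in> span {x 0}" if "m < k" for m
    using that by (metis span_base span_neg singletonI)
  then show ?thesis by (intro exI[of _ "x 0"]) auto
next
  case False
  then obtain m where m: "m < k" "x m \<noteq> x 0" "x m \<noteq> - x 0" by blast
  have x: "\<forall>i<k. norm (x i) = 1" using attains by (simp add: attains_norm_at_def)
  have "x l \<in> span {x 0, x m}" if l: "l < k" for l
  proof (cases "l = 0 \<or> l = m")
    case False
    have "x 0 + x m \<noteq> 0" using m(3) by (metis add.commute eq_neg_iff_add_eq_0)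
    then obtain a b where "x l = a *\<^sub>R x 0 + b *\<^sub>R x m"
      using attains_norm_imp_slot_in_span[OF ml _ sym cont attains real_inner_form_inner
          norming_functional_real, of 0 m l "x 0" "x m"] m k l False x by fastforce
    moreover have "x 0 \<in> span {x 0, x m}" "x m \<in> span {x 0, x m}" by (simp_all add: span_base)
    ultimately show ?thesis by (simp add: span_add span_scale)
  qed (auto intro: span_base)
  then show ?thesis by blast
qed

lemma real_norm_attaining_iff:
  fixes x :: "nat \<Rightarrow> 'a::real_inner"
  assumes k: "0 < k" and x: "\<forall>i<k. norm (x i) = 1"
  shows "(\<exists>T :: (nat \<Rightarrow> 'a) \<Rightarrow> real. multilinear_form scaleR k T \<and> symmetric_form k T \<and>
      continuous_on UNIV T \<and> attains_norm_at k T x)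
    \<longleftrightarrow> dim (span (x ` {..<k})) \<in> {1, 2}"
proof -
  have plane_iff: "dim (span (x ` {..<k})) \<in> {1, 2} \<longleftrightarrow> (\<exists>b. x ` {..<k} \<subseteq> span {x 0, b})"
    using x k by (intro real_vector.dim_span_in_1_2_iff) auto
  show ?thesis
  proof
    assume "\<exists>T :: (nat \<Rightarrow> 'a) \<Rightarrow> real. multilinear_form scaleR k T \<and> symmetric_form k T \<and>
      continuous_on UNIV T \<and> attains_norm_at k T x"
    then show "dim (span (x ` {..<k})) \<in> {1, 2}"
      using real_attains_norm_imp_plane[OF _ _ _ _ k] plane_iff by blast
  next
    assume "dim (span (x ` {..<k})) \<in> {1, 2}"
    then obtain b where "x ` {..<k} \<subseteq> span {x 0, b}" using plane_iff by blast
    then show "\<exists>T :: (nat \<Rightarrow> 'a) \<Rightarrow> real. multilinear_form scaleR k T \<and> symmetric_form k T \<and>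
      continuous_on UNIV T \<and> attains_norm_at k T x"
      using real_form_attaining_norm_in_plane[OF _ x] x k by blast
  qed
qed

section \<open>The complex case\<close>

lemma vector_space_scaleC: "vector_space (scaleC :: complex \<Rightarrow> 'a::complex_vector \<Rightarrow> 'a)"
  by unfold_locales (simp_all add: scaleC_add_right scaleC_add_left scaleC_scaleC scaleC_one)

lemma cinner_add_right: "cinner z (x + y) = cinner z x + cinner z y"
  by (metis cinner_commute cinner_add_left complex_cnj_add)

lemma cinner_scaleC_right: "cinner z (scaleC c x) = c * cinner z x"
  by (metis cinner_commute cinner_scaleC_left complex_cnj_cnj complex_cnj_mult)

lemma cinner_self: "cinner x x = of_real ((norm x)\<^sup>2)"
proof -
  have "Im (cinner x x) = 0"
    using cinner_commute[of x x] by (metis cnj.simps(2) neg_equal_zero)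
  then show ?thesis
    using norm_eq_sqrt_cinner[of x] cinner_ge_zero[of x] by (simp add: complex_eq_iff)
qed

lemma norm_scaleC: "norm (scaleC c x) = cmod c * norm (x::'a::complex_inner)"
proof -
  have "(norm (scaleC c x))\<^sup>2 = Re (cinner (scaleC c x) (scaleC c x))"
    by (simp add: cinner_self)
  also have "\<dots> = ((Re c)\<^sup>2 + (Im c)\<^sup>2) * (norm x)\<^sup>2"
    by (simp add: cinner_scaleC_left cinner_scaleC_right cinner_self[of x] power2_eq_square
        algebra_simps)
  also have "\<dots> = (cmod c * norm x)\<^sup>2"
    by (simp add: cmod_power2 power_mult_distrib)
  finally have "(norm (scaleC c x))\<^sup>2 = (cmod c * norm x)\<^sup>2" .
  then show ?thesis by (simp add: power2_eq_iff_nonneg)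
qed

lemma real_inner_form_Re_cinner: "real_inner_form (\<lambda>x y::'a::complex_inner. Re (cinner x y))"
proof
  show "Re (cinner x y) = Re (cinner y x)" for x y :: 'a by (subst cinner_commute) simp
  show "Re (cinner (x + y) z) = Re (cinner x z) + Re (cinner y z)" for x y z :: 'a
    by (simp add: cinner_add_left)
  show "Re (cinner (r *\<^sub>R x) y) = r * Re (cinner x y)" for r and x y :: 'a
    by (simp add: scaleR_scaleC cinner_scaleC_left)
  show "norm x = sqrt (Re (cinner x x))" for x :: 'a by (rule norm_eq_sqrt_cinner)
qed

text \<open>Bessel's inequality for the real-orthonormal pair e, i e.\<close>

lemma norm_cinner_unit_le:
  assumes e: "norm e = 1"
  shows "cmod (cinner e w) \<le> norm w"
proof -
  interpret real_inner_form "\<lambda>x y::'a::complex_inner. Re (cinner x y)"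
    by (rule real_inner_form_Re_cinner)
  have "Re (cinner e (scaleC \<i> e)) = 0"
    by (simp add: cinner_scaleC_right cinner_self)
  moreover have "norm (scaleC \<i> e) = 1" using e by (simp add: norm_scaleC)
  ultimately have "(Re (cinner e w))\<^sup>2 + (Re (cinner (scaleC \<i> e) w))\<^sup>2 \<le> (norm w)\<^sup>2"
    using ip_Bessel_pair[OF e] by blast
  then have "(cmod (cinner e w))\<^sup>2 \<le> (norm w)\<^sup>2"
    by (simp add: cinner_scaleC_left cmod_power2)
  then show ?thesis by (simp add: power2_le_iff_abs_le)
qed

lemma complex_form_attaining_norm_on_line:
  fixes x :: "nat \<Rightarrow> 'a::complex_inner"
  assumes e: "norm e = 1" and x: "\<forall>i<k. norm (x i) = 1"
    and line: "x ` {..<k} \<subseteq> module.span scaleC {e}"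
  shows "\<exists>T :: (nat \<Rightarrow> 'a) \<Rightarrow> complex. multilinear_form scaleC k T \<and> symmetric_form k T \<and>
    continuous_on UNIV T \<and> attains_norm_at k T x"
proof -
  interpret cv: vector_space "scaleC :: complex \<Rightarrow> 'a \<Rightarrow> 'a" by (rule vector_space_scaleC)
  have bound: "cmod (cinner e w) \<le> norm w" for w
    using norm_cinner_unit_le[OF e] .
  have zx: "\<forall>i<k. cmod (cinner e (x i)) = 1"
  proof (intro allI impI)
    fix i assume i: "i < k"
    then obtain g where g: "x i = scaleC g e" using line cv.span_singleton by blast
    then have "cmod g = 1" using x[rule_format, OF i] e norm_scaleC[of g e] by simp
    then show "cmod (cinner e (x i)) = 1"
      using e by (simp add: g cinner_scaleC_right cinner_self)
  qed
  have bl: "bounded_linear (cinner e)"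
    using bound by (intro bounded_linear_intro[where K = 1])
      (simp_all add: cinner_add_right scaleR_scaleC cinner_scaleC_right scaleR_conv_of_real)
  define T where "T = (\<lambda>w. (\<Prod>i<k. cinner e (w i)) / (\<Prod>i<k. cinner e (x i)))"
  have "multilinear_form scaleC k T"
    unfolding T_def
    by (rule multilinear_form_prod) (simp_all add: cinner_add_right cinner_scaleC_right)
  moreover have "symmetric_form k T"
    unfolding T_def by (rule symmetric_form_prod[where f = "\<lambda>p. p / _"])
  moreover have "continuous_on UNIV T"
    unfolding T_def by (rule continuous_on_prod_slots[OF bl continuous_on_id])
  moreover have "attains_norm_at k T x"
    using attains_norm_at_prod_div[OF bound zx x, where f = "\<lambda>s. s"] by (simp add: T_def)
  ultimately show ?thesis by blast
qed

lemma in_complex_span_if_two_real_combinations: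
  fixes u y1 y2 :: "'a::complex_vector"
  assumes u1: "u = a *\<^sub>R y1 + b *\<^sub>R y2" and u2: "u = c *\<^sub>R scaleC \<i> y1 + d *\<^sub>R scaleC (- \<i>) y2"
    and u: "u \<noteq> 0" and y1: "y1 \<noteq> 0"
  shows "y2 \<in> module.span scaleC {y1}"
proof -
  interpret cv: vector_space "scaleC :: complex \<Rightarrow> 'a \<Rightarrow> 'a" by (rule vector_space_scaleC)
  define \<alpha> where "\<alpha> = complex_of_real a - of_real c * \<i>"
  define \<beta> where "\<beta> = - (complex_of_real d * \<i>) - of_real b"
  have "scaleC (of_real a) y1 + scaleC (of_real b) y2
      = scaleC (of_real c * \<i>) y1 + scaleC (- (of_real d * \<i>)) y2"
    using u1 u2 by (simp add: scaleR_scaleC scaleC_scaleC)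
  then have E: "scaleC \<alpha> y1 = scaleC \<beta> y2"
    unfolding \<alpha>_def \<beta>_def cv.scale_left_diff_distrib by (simp add: algebra_simps)
  show ?thesis
  proof (cases "\<beta> = 0")
    case False
    then have "y2 = scaleC (\<alpha> / \<beta>) y1"
      using E by (simp add: scaleC_scaleC divide_inverse mult.commute[of \<alpha>] flip: scaleC_scaleC)
    then show ?thesis by (simp add: cv.span_base cv.span_scale)
  next
    case True
    then have "b = 0" "d = 0" by (simp_all add: \<beta>_def complex_eq_iff)
    moreover have "\<alpha> = 0" using E True y1 by simp
    then have "a = 0" "c = 0" by (simp_all add: \<alpha>_def complex_eq_iff)
    ultimately show ?thesis using u1 u by simp
  qed
qed

text \<open>Rotating slots 0 and m by i and -i leaves T x unchanged, so the slot lemma applies to both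
  pairs (x 0, x m) and (i x 0, -i x m); a third slot l exists because k is at least 3.\<close>

lemma complex_attains_norm_imp_dependent:
  fixes T :: "(nat \<Rightarrow> 'a::complex_inner) \<Rightarrow> complex"
  assumes ml: "multilinear_form scaleC k T" and sym: "symmetric_form k T"
    and cont: "continuous_on UNIV T" and attains: "attains_norm_at k T x" and k: "3 \<le> k"
    and m: "m < k" and diff: "x 0 \<noteq> x m" and sum: "x 0 + x m \<noteq> 0"
  shows "x m \<in> module.span scaleC {x 0}"
proof -
  interpret cv: vector_space "scaleC :: complex \<Rightarrow> 'a \<Rightarrow> 'a" by (rule vector_space_scaleC)
  have x: "\<forall>i<k. norm (x i) = 1" using attains by (simp add: attains_norm_at_def)
  have sc_of_real: "scaleC (of_real r) u = r *\<^sub>R u" for r and u :: 'a by (simp add: scaleR_scaleC)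
  have m0: "m \<noteq> 0" using diff by metis
  have k0: "0 < k" using k by simp
  define l where "l = (if m = 1 then 2 else 1 :: nat)"
  have l: "l < k" "l \<noteq> 0" "l \<noteq> m" using k m0 by (auto simp: l_def)
  note slot_in_span = attains_norm_imp_slot_in_span[OF ml sc_of_real sym cont attains
      real_inner_form_Re_cinner norming_functional_complex k0 m l(1) m0[symmetric]
      l(2)[symmetric] l(3)[symmetric]]
  have "norm (x 0) = 1" "norm (x m) = 1" using x k0 m by simp_all
  then have "\<exists>a b. x l = a *\<^sub>R x 0 + b *\<^sub>R x m"
    using slot_in_span[OF _ _ _ sum diff] by simp
  then obtain a b where ab: "x l = a *\<^sub>R x 0 + b *\<^sub>R x m" by blast
  have rotate: "T (x(0 := scaleC \<i> (x 0), m := scaleC (- \<i>) (x m))) = T x"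
    using multilinear_form_scale_two_slots[OF ml k0 m m0[symmetric], of x \<i> "- \<i>"] by simp
  have "scaleC \<i> (x 0) + scaleC (- \<i>) (x m) = scaleC \<i> (x 0 - x m)"
    by (simp add: cv.scale_right_diff_distrib)
  then have rot_sum: "scaleC \<i> (x 0) + scaleC (- \<i>) (x m) \<noteq> 0" using diff by simp
  have "scaleC \<i> (x 0) - scaleC (- \<i>) (x m) = scaleC \<i> (x 0 + x m)"
    by (simp add: scaleC_add_right)
  then have rot_diff: "scaleC \<i> (x 0) \<noteq> scaleC (- \<i>) (x m)" using sum by auto
  have "norm (scaleC \<i> (x 0)) = 1" "norm (scaleC (- \<i>) (x m)) = 1"
    using x k0 m by (simp_all add: norm_scaleC)
  then obtain c d where cd: "x l = c *\<^sub>R scaleC \<i> (x 0) + d *\<^sub>R scaleC (- \<i>) (x m)"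
    using slot_in_span[OF _ _ rotate rot_sum rot_diff] by blast
  show ?thesis
    using in_complex_span_if_two_real_combinations[OF ab cd] x l(1) k by force
qed

lemma complex_attains_norm_imp_line:
  fixes T :: "(nat \<Rightarrow> 'a::complex_inner) \<Rightarrow> complex"
  assumes ml: "multilinear_form scaleC k T" and sym: "symmetric_form k T"
    and cont: "continuous_on UNIV T" and attains: "attains_norm_at k T x" and k: "3 \<le> k"
  shows "x ` {..<k} \<subseteq> module.span scaleC {x 0}"
proof -
  interpret cv: vector_space "scaleC :: complex \<Rightarrow> 'a \<Rightarrow> 'a" by (rule vector_space_scaleC)
  have "x m \<in> cv.span {x 0}" if m: "m < k" for m
  proof (cases "x m = x 0 \<or> x m = - x 0")
    case True
    then show ?thesis by (metis cv.span_base cv.span_neg singletonI)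
  next
    case False
    then have "x 0 \<noteq> x m" "x 0 + x m \<noteq> 0" by (auto simp: add_eq_0_iff2)
    then show ?thesis by (rule complex_attains_norm_imp_dependent[OF ml sym cont attains k m])
  qed
  then show ?thesis by blast
qed

lemma complex_norm_attaining_iff:
  fixes x :: "nat \<Rightarrow> 'a::complex_inner"
  assumes k: "3 \<le> k" and x: "\<forall>i<k. norm (x i) = 1"
  shows "(\<exists>T :: (nat \<Rightarrow> 'a) \<Rightarrow> complex. multilinear_form scaleC k T \<and> symmetric_form k T \<and>
      continuous_on UNIV T \<and> attains_norm_at k T x)
    \<longleftrightarrow> vector_space.dim scaleC (module.span scaleC (x ` {..<k})) = 1"
proof -
  interpret cv: vector_space "scaleC :: complex \<Rightarrow> 'a \<Rightarrow> 'a" by (rule vector_space_scaleC)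
  have line_iff: "cv.dim (cv.span (x ` {..<k})) = 1 \<longleftrightarrow> x ` {..<k} \<subseteq> cv.span {x 0}"
    using x[rule_format, of 0] k by (intro cv.dim_span_eq_1_iff) auto
  show ?thesis
  proof
    assume "\<exists>T :: (nat \<Rightarrow> 'a) \<Rightarrow> complex. multilinear_form scaleC k T \<and> symmetric_form k T \<and>
      continuous_on UNIV T \<and> attains_norm_at k T x"
    then show "cv.dim (cv.span (x ` {..<k})) = 1"
      using complex_attains_norm_imp_line[OF _ _ _ _ k] line_iff by blast
  next
    assume "cv.dim (cv.span (x ` {..<k})) = 1"
    then show "\<exists>T :: (nat \<Rightarrow> 'a) \<Rightarrow> complex. multilinear_form scaleC k T \<and> symmetric_form k T \<and>
      continuous_on UNIV T \<and> attains_norm_at k T x"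
      using complex_form_attaining_norm_on_line[OF _ x] line_iff x[rule_format, of 0] k by simp
  qed
qed

theorem theorem1p1:
  fixes k :: nat
  assumes "k \<ge> 3"
  shows
    "(\<forall>x :: nat \<Rightarrow> 'a::{real_inner, complete_space}.
        (\<forall>i<k. norm (x i) = 1) \<longrightarrow>
        ((\<exists>T :: (nat \<Rightarrow> 'a) \<Rightarrow> real.
            multilinear_form scaleR k T \<and> symmetric_form k T \<and> continuous_on UNIV T \<and>
            attains_norm_at k T x)
         \<longleftrightarrow> dim (span (x ` {..<k})) \<in> {1, 2}))
     \<and>
     (\<forall>x :: nat \<Rightarrow> 'b::{complex_inner, complete_space}.
        (\<forall>i<k. norm (x i) = 1) \<longrightarrow>
        ((\<exists>T :: (nat \<Rightarrow> 'b) \<Rightarrow> complex.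
            multilinear_form scaleC k T \<and> symmetric_form k T \<and> continuous_on UNIV T \<and>
            attains_norm_at k T x)
         \<longleftrightarrow> vector_space.dim (scaleC :: complex \<Rightarrow> 'b \<Rightarrow> 'b)
                (module.span (scaleC :: complex \<Rightarrow> 'b \<Rightarrow> 'b) (x ` {..<k})) = 1))"
proof -
  have "0 < k" using assms by simp
  then show ?thesis using real_norm_attaining_iff complex_norm_attaining_iff[OF assms] by blast
qed

end
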